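(* Let $n\ge 0$ and $-1\le i,j\le n$ be integers, and let $p\in\Gamma_n$ be written as a concatenation $p=c\,q_2\,b\,q_1\,a$ of paths with $q_1\in\Gamma_i$ and $q_2\in\Gamma_j$. Then $i+j\le n-1$.
   Context: Let $\Bbbk$ be a field, $Q=(Q_0,Q_1,s,t)$ a finite quiver, and $A=\Bbbk Q/I$ a finite-dimensional monomial algebra, i.e. $I$ is an ideal generated by paths of length at least $2$. Paths are written from right to left: a path is $p=\alpha_n\cdots\alpha_1$ with arrows $\alpha_i$ and $t(\alpha_i)=s(\alpha_{i+1})$; vertices are the paths of length $0$; $qp$ denotes concatenation when $t(p)=s(q)$. Let $\mathcal B$ be the set of paths not lying in $I$. A suffix of a path $p$ is a path $q$ with $p=qa$; a prefix is a path $q$ with $p=bq$; proper means $q\ne p$. For $n\ge -1$, a left $n$-ambiguity is a path $p$ with a decomposition $p=u_{-1}u_0u_1\cdots u_n$ such that $u_{-1}\in Q_0$, $u_0\in Q_1$, $u_i\in\mathcal B$ for all $i$, and for every $0\le i\le n-1$, $u_iu_{i+1}\in I$ while no proper suffix of $u_iu_{i+1}$ lies in $I$. A right $n$-ambiguity is a path with a decomposition $p=v_n\cdots v_0v_{-1}$ with $v_{-1}\in Q_0$, $v_0\in Q_1$, $v_i\in\mathcal B$, and for $0\le i\le n-1$, $v_{i+1}v_i\in I$ while no proper prefix of $v_{i+1}v_i$ lies in $I$. A path is a left $n$-ambiguity iff it is a right $n$-ambiguity; such paths are called $n$-ambiguities, and $\Gamma_n$ denotes their set. *)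

theory Defs
  imports Main
begin

record ('v, 'a) quiver =
  verts :: "'v set"
  arrs  :: "'a set"
  src   :: "'a \<Rightarrow> 'v"
  tgt   :: "'a \<Rightarrow> 'v"

text \<open>A path p = alpha_n ... alpha_1 is stored by its source vertex and its list of
  arrows in written (right-to-left) order [alpha_n, ..., alpha_1].\<close>
datatype ('v, 'a) qpath = QPath (pstart: 'v) (parrs: "'a list")

definition plen :: "('v, 'a) qpath \<Rightarrow> nat" where
  "plen p = length (parrs p)"

definition is_path :: "('v, 'a, 'b) quiver_scheme \<Rightarrow> ('v, 'a) qpath \<Rightarrow> bool" where
  "is_path Q p \<longleftrightarrow> pstart p \<in> verts Q \<and> set (parrs p) \<subseteq> arrs Q
     \<and> (parrs p \<noteq> [] \<longrightarrow> src Q (last (parrs p)) = pstart p)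
     \<and> (\<forall>k. Suc k < length (parrs p) \<longrightarrow> src Q (parrs p ! k) = tgt Q (parrs p ! Suc k))"

definition pend :: "('v, 'a, 'b) quiver_scheme \<Rightarrow> ('v, 'a) qpath \<Rightarrow> 'v" where
  "pend Q p = (if parrs p = [] then pstart p else tgt Q (hd (parrs p)))"

text \<open>Concatenation qp (first p, then q), meaningful when t(p) = s(q).\<close>
definition pcat :: "('v, 'a) qpath \<Rightarrow> ('v, 'a) qpath \<Rightarrow> ('v, 'a) qpath" where
  "pcat q p = QPath (pstart p) (parrs q @ parrs p)"

definition composable :: "('v, 'a, 'b) quiver_scheme \<Rightarrow> ('v, 'a) qpath \<Rightarrow> ('v, 'a) qpath \<Rightarrow> bool" where
  "composable Q q p \<longleftrightarrow> is_path Q q \<and> is_path Q p \<and> pend Q p = pstart q"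

fun pcat_list :: "('v, 'a) qpath list \<Rightarrow> ('v, 'a) qpath" where
  "pcat_list [] = undefined"
| "pcat_list [u] = u"
| "pcat_list (u # us) = pcat u (pcat_list us)"

definition in_ideal :: "('v, 'a, 'b) quiver_scheme \<Rightarrow> ('v, 'a) qpath set \<Rightarrow> ('v, 'a) qpath \<Rightarrow> bool" where
  "in_ideal Q R p \<longleftrightarrow> is_path Q p \<and>
     (\<exists>x r y. r \<in> R \<and> composable Q r y \<and> composable Q x (pcat r y) \<and> p = pcat x (pcat r y))"

definition nonzero_paths :: "('v, 'a, 'b) quiver_scheme \<Rightarrow> ('v, 'a) qpath set \<Rightarrow> ('v, 'a) qpath set" where
  "nonzero_paths Q R = {p. is_path Q p \<and> \<not> in_ideal Q R p}"

definition monomial_algebra :: "('v, 'a, 'b) quiver_scheme \<Rightarrow> ('v, 'a) qpath set \<Rightarrow> bool" where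
  "monomial_algebra Q R \<longleftrightarrow> finite (verts Q) \<and> finite (arrs Q)
     \<and> (\<forall>a\<in>arrs Q. src Q a \<in> verts Q \<and> tgt Q a \<in> verts Q)
     \<and> (\<forall>r\<in>R. is_path Q r \<and> 2 \<le> plen r)
     \<and> finite (nonzero_paths Q R)"

definition is_suffix :: "('v, 'a, 'b) quiver_scheme \<Rightarrow> ('v, 'a) qpath \<Rightarrow> ('v, 'a) qpath \<Rightarrow> bool" where
  "is_suffix Q q p \<longleftrightarrow> (\<exists>a. composable Q q a \<and> p = pcat q a)"

text \<open>Left n-ambiguity: p = u_{-1} u_0 u_1 ... u_n, where us ! k = u_{k-1}.\<close>
definition left_amb :: "('v, 'a, 'b) quiver_scheme \<Rightarrow> ('v, 'a) qpath set \<Rightarrow> int \<Rightarrow> ('v, 'a) qpath \<Rightarrow> bool" where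
  "left_amb Q R n p \<longleftrightarrow> -1 \<le> n \<and>
     (\<exists>us. length us = nat (n + 2)
       \<and> (\<forall>k < length us. us ! k \<in> nonzero_paths Q R)
       \<and> (\<forall>k. Suc k < length us \<longrightarrow> composable Q (us ! k) (us ! Suc k))
       \<and> p = pcat_list us
       \<and> plen (us ! 0) = 0
       \<and> (1 < length us \<longrightarrow> plen (us ! 1) = 1)
       \<and> (\<forall>m. 1 \<le> m \<and> Suc m < length us \<longrightarrow>
             in_ideal Q R (pcat (us ! m) (us ! Suc m))
           \<and> (\<forall>q. is_suffix Q q (pcat (us ! m) (us ! Suc m)) \<and> q \<noteq> pcat (us ! m) (us ! Suc m)
                 \<longrightarrow> \<not> in_ideal Q R q)))"

text \<open>Gamma_n, the set of n-ambiguities (left n-ambiguities; equivalently right ones).\<close>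
definition Gamma :: "('v, 'a, 'b) quiver_scheme \<Rightarrow> ('v, 'a) qpath set \<Rightarrow> int \<Rightarrow> ('v, 'a) qpath set" where
  "Gamma Q R n = {p. left_amb Q R n p}"

end

theory Submission
  imports Defs
begin

text \<open>A path lies in I iff some factor of it is a relation, which we record by the interval
  [s, t) of positions it occupies in the arrow list of p. Let E k be the end of u_(k-1) in the
  left ambiguity p = u_(-1) u_0 ... u_n. Minimality of u_(m-1) u_m says that every relation
  starting at or after E (m-1) ends at or after E (m+1), so the chain of p is greedy: the chain
  of q2 lags behind it, hence q1 starts after E (j+1). Every two steps of the chain of q1
  contain a relation, which pushes E two steps further, while its arrow u_0 and the strict
  growth of its chain account for the odd steps. As u_n contains no relation,
  (i + 1) + (j + 1) \<le> n + 1.\<close>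

definition occurs :: "('v, 'a) qpath set \<Rightarrow> 'a list \<Rightarrow> nat \<Rightarrow> nat \<Rightarrow> bool" where
  "occurs R l s t \<longleftrightarrow> s < t \<and> t \<le> length l \<and> (\<exists>r\<in>R. parrs r = take (t - s) (drop s l))"

lemma occurs_segmentD:
  assumes "occurs R (take (b - a) (drop a l)) s t" "a \<le> b" "b \<le> length l"
  shows "occurs R l (s + a) (t + a) \<and> t + a \<le> b"
proof -
  have t: "t \<le> b - a" using assms(1,3) by (auto simp: occurs_def)
  have "take (t - s) (drop s (take (b - a) (drop a l))) = take (t - s) (drop (s + a) l)"
    using t by (simp add: drop_take take_take min_def add.commute)
  then show ?thesis using assms t by (auto simp: occurs_def)
qed

lemma occurs_segmentI:
  assumes "occurs R l s t" "a \<le> s" "t \<le> b" "b \<le> length l"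
  shows "occurs R (take (b - a) (drop a l)) (s - a) (t - a)"
proof -
  have "take (t - s) (drop (s - a) (take (b - a) (drop a l))) = take (t - s) (drop s l)"
    using assms by (simp add: drop_take take_take min_def add.commute)
  moreover have "t - a - (s - a) = t - s" using assms by (auto simp: occurs_def)
  ultimately show ?thesis using assms by (auto simp: occurs_def)
qed

lemma occurs_append:
  assumes "occurs R l s t"
  shows "occurs R (X @ l @ Y) (length X + s) (length X + t)"
  using assms by (auto simp: occurs_def)

definition vertex_at :: "('v, 'a, 'b) quiver_scheme \<Rightarrow> ('v, 'a) qpath \<Rightarrow> nat \<Rightarrow> 'v" where
  "vertex_at Q P k = (if k < plen P then tgt Q (parrs P ! k) else pstart P)"

definition subpath :: "('v, 'a, 'b) quiver_scheme \<Rightarrow> ('v, 'a) qpath \<Rightarrow> nat \<Rightarrow> nat \<Rightarrow> ('v, 'a) qpath" where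
  "subpath Q P a b = QPath (vertex_at Q P b) (take (b - a) (drop a (parrs P)))"

lemma pstart_subpath [simp]: "pstart (subpath Q P a b) = vertex_at Q P b"
  and parrs_subpath [simp]: "parrs (subpath Q P a b) = take (b - a) (drop a (parrs P))"
  by (simp_all add: subpath_def)

lemma src_nth_pred_eq_vertex_at:
  assumes "is_path Q P" "0 < b" "b \<le> plen P"
  shows "src Q (parrs P ! (b - 1)) = vertex_at Q P b"
proof (cases "b < plen P")
  case True
  then show ?thesis using assms by (auto simp: is_path_def vertex_at_def plen_def)
next
  case False
  then have "b = length (parrs P)" using assms by (auto simp: plen_def)
  then show ?thesis using assms by (auto simp: is_path_def vertex_at_def plen_def last_conv_nth)
qed

lemma is_path_subpath:
  assumes P: "is_path Q P" and tgt_verts: "\<forall>x\<in>arrs Q. tgt Q x \<in> verts Q"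
    and ab: "a \<le> b" "b \<le> plen P"
  shows "is_path Q (subpath Q P a b)"
proof -
  let ?l = "parrs P" and ?w = "take (b - a) (drop a (parrs P))"
  have "vertex_at Q P b \<in> verts Q"
    using P tgt_verts by (auto simp: vertex_at_def is_path_def plen_def dest!: nth_mem)
  moreover have "set ?w \<subseteq> arrs Q"
    using P by (auto simp: is_path_def dest: in_set_takeD in_set_dropD)
  moreover have "src Q (last ?w) = vertex_at Q P b" if "?w \<noteq> []"
  proof -
    have "last ?w = ?l ! (b - 1)"
      using that ab by (auto simp: last_conv_nth plen_def)
    then show ?thesis using src_nth_pred_eq_vertex_at[OF P _ ab(2)] that by auto
  qed
  moreover have "src Q (?w ! k) = tgt Q (?w ! Suc k)" if "Suc k < length ?w" for k
    using P that unfolding is_path_def by (auto simp: plen_def)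
  ultimately show ?thesis by (simp add: subpath_def is_path_def)
qed

lemma pend_subpath: "a \<le> b \<Longrightarrow> b \<le> plen P \<Longrightarrow> pend Q (subpath Q P a b) = vertex_at Q P a"
  by (auto simp: pend_def vertex_at_def plen_def hd_drop_conv_nth)

lemma pcat_subpath:
  assumes "a \<le> b" "b \<le> c"
  shows "pcat (subpath Q P a b) (subpath Q P b c) = subpath Q P a c"
proof -
  have "c - a = (b - a) + (c - b)" using assms by simp
  then have "take (c - a) (drop a (parrs P))
      = take (b - a) (drop a (parrs P)) @ take (c - b) (drop (b - a) (drop a (parrs P)))"
    by (simp only: take_add)
  also have "drop (b - a) (drop a (parrs P)) = drop b (parrs P)" using assms by simp
  finally show ?thesis by (simp add: pcat_def subpath_def)
qed

lemma subpath_full: "subpath Q P 0 (plen P) = P"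
  by (cases P) (simp add: subpath_def vertex_at_def plen_def)

lemma subpath_eqI:
  assumes r: "is_path Q r" "parrs r = take (t - s) (drop s (parrs P))"
    and st: "s < t" "t \<le> plen P" and P: "is_path Q P"
  shows "r = subpath Q P s t"
proof -
  have "last (parrs r) = parrs P ! (t - 1)"
    using r st by (auto simp: last_conv_nth plen_def)
  then have "pstart r = vertex_at Q P t"
    using src_nth_pred_eq_vertex_at[OF P _ st(2)] r st by (auto simp: is_path_def plen_def)
  then show ?thesis using r(2) by (cases r) (simp add: subpath_def)
qed

text \<open>Paths are written from right to left, so a suffix is an initial segment of the arrow list.\<close>

lemma is_suffix_subpath:
  assumes "is_path Q P" "\<forall>x\<in>arrs Q. tgt Q x \<in> verts Q" "b \<le> plen P"
  shows "is_suffix Q (subpath Q P 0 b) P"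
proof -
  have "composable Q (subpath Q P 0 b) (subpath Q P b (plen P))"
    using is_path_subpath[OF assms(1,2)] assms(3) by (auto simp: composable_def pend_subpath)
  moreover have "P = pcat (subpath Q P 0 b) (subpath Q P b (plen P))"
    using assms(3) by (simp add: pcat_subpath subpath_full)
  ultimately show ?thesis unfolding is_suffix_def by blast
qed

lemma in_ideal_iff_occurs:
  assumes M: "monomial_algebra Q R" and P: "is_path Q P"
  shows "in_ideal Q R P \<longleftrightarrow> (\<exists>s t. occurs R (parrs P) s t)"
proof
  assume "in_ideal Q R P"
  then obtain x r y where r: "r \<in> R" and P_eq: "P = pcat x (pcat r y)"
    unfolding in_ideal_def by blast
  have "2 \<le> plen r" using M r by (simp add: monomial_algebra_def)
  then have "occurs R (parrs P) (length (parrs x)) (length (parrs x) + length (parrs r))"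
    using r P_eq by (auto simp: occurs_def pcat_def plen_def)
  then show "\<exists>s t. occurs R (parrs P) s t" by blast
next
  assume "\<exists>s t. occurs R (parrs P) s t"
  then obtain s t r where r: "r \<in> R" "parrs r = take (t - s) (drop s (parrs P))"
    and st: "s < t" "t \<le> plen P"
    by (auto simp: occurs_def plen_def)
  have T: "\<forall>x\<in>arrs Q. tgt Q x \<in> verts Q" using M by (simp add: monomial_algebra_def)
  have "is_path Q r" using M r(1) by (simp add: monomial_algebra_def)
  then have r_eq: "r = subpath Q P s t" using subpath_eqI r(2) st P by blast
  have "composable Q (subpath Q P s t) (subpath Q P t (plen P))"
    and "composable Q (subpath Q P 0 s) (pcat (subpath Q P s t) (subpath Q P t (plen P)))"
    using is_path_subpath[OF P T] st by (auto simp: composable_def pend_subpath pcat_subpath)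
  moreover have "P = pcat (subpath Q P 0 s) (pcat (subpath Q P s t) (subpath Q P t (plen P)))"
    using st by (simp add: pcat_subpath subpath_full)
  ultimately show "in_ideal Q R P" using P r(1) r_eq unfolding in_ideal_def by blast
qed

lemma parrs_pcat_list: "us \<noteq> [] \<Longrightarrow> parrs (pcat_list us) = concat (map parrs us)"
  by (induction us rule: pcat_list.induct) (auto simp: pcat_def)

definition offset :: "('v, 'a) qpath list \<Rightarrow> nat \<Rightarrow> nat" where
  "offset us k = length (concat (take k (map parrs us)))"

lemma offset_Suc: "k < length us \<Longrightarrow> offset us (Suc k) = offset us k + plen (us ! k)"
  by (simp add: offset_def plen_def take_Suc_conv_app_nth)

lemma offset_le_length: "offset us k \<le> length (concat (map parrs us))"
  unfolding offset_def by (metis append_take_drop_id concat_append length_append le_add1)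

lemma offset_mono: "k \<le> j \<Longrightarrow> offset us k \<le> offset us j"
  unfolding offset_def by (metis append_take_drop_id concat_append length_append le_add1 take_take min_def)

lemma offset_length: "offset us (length us) = length (concat (map parrs us))"
  by (simp add: offset_def)

lemma offset_start:
  assumes "2 \<le> length us" "plen (us ! 0) = 0" "plen (us ! 1) = 1"
  shows "offset us 1 = 0" "offset us 2 = 1"
proof -
  have "offset us 0 = 0" by (simp add: offset_def)
  moreover have "0 < length us" using assms(1) by linarith
  ultimately show "offset us 1 = 0" using offset_Suc[of 0 us] assms(2) by simp
  then show "offset us 2 = 1" using offset_Suc[of 1 us] assms by (simp add: numeral_2_eq_2)
qed

lemma segment_offset:
  assumes "k \<le> j" "j \<le> length us"
  shows "take (offset us j - offset us k) (drop (offset us k) (concat (map parrs us)))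
    = concat (map parrs (take (j - k) (drop k us)))"
proof -
  let ?xs = "map parrs us"
  have "take j ?xs = take k ?xs @ take (j - k) (drop k ?xs)"
    using assms by (metis le_add_diff_inverse take_add)
  moreover have "concat ?xs = concat (take k ?xs) @ concat (take (j - k) (drop k ?xs))
      @ concat (drop (j - k) (drop k ?xs))"
    by (metis append_take_drop_id concat_append)
  ultimately show ?thesis by (simp add: offset_def take_map drop_map)
qed

lemma parrs_nth_segment:
  "k < length us \<Longrightarrow> parrs (us ! k)
    = take (offset us (k + 1) - offset us k) (drop (offset us k) (concat (map parrs us)))"
  by (simp add: segment_offset Cons_nth_drop_Suc[symmetric])

lemma parrs_pcat_nth_segment:
  "k + 1 < length us \<Longrightarrow> parrs (pcat (us ! k) (us ! (k + 1)))
    = take (offset us (k + 2) - offset us k) (drop (offset us k) (concat (map parrs us)))"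
  by (simp add: segment_offset Cons_nth_drop_Suc[symmetric] pcat_def numeral_2_eq_2)

lemma occurs_after_minimal_overlap:
  assumes M: "monomial_algebra Q R" and I: "in_ideal Q R (pcat (us ! m) (us ! (m + 1)))"
    and minimal: "\<forall>q. is_suffix Q q (pcat (us ! m) (us ! (m + 1)))
        \<and> q \<noteq> pcat (us ! m) (us ! (m + 1)) \<longrightarrow> \<not> in_ideal Q R q"
    and m: "m + 1 < length us" and occ: "occurs R (concat (map parrs us)) s t"
    and s: "offset us m \<le> s"
  shows "offset us (m + 2) \<le> t"
proof (rule ccontr)
  assume "\<not> offset us (m + 2) \<le> t"
  define w where "w = pcat (us ! m) (us ! (m + 1))"
  define b where "b = t - offset us m"
  have T: "\<forall>x\<in>arrs Q. tgt Q x \<in> verts Q" using M by (simp add: monomial_algebra_def)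
  have w: "is_path Q w" using I unfolding w_def in_ideal_def by blast
  have le: "offset us (m + 2) \<le> length (concat (map parrs us))" by (rule offset_le_length)
  have occ_w: "occurs R (parrs w) (s - offset us m) b"
    unfolding w_def parrs_pcat_nth_segment[OF m] b_def
    using occurs_segmentI[OF occ s _ le] \<open>\<not> offset us (m + 2) \<le> t\<close> by simp
  have b: "b < plen w"
    using occ_w \<open>\<not> offset us (m + 2) \<le> t\<close> le s
    unfolding w_def parrs_pcat_nth_segment[OF m] b_def plen_def occurs_def by auto
  have "is_suffix Q (subpath Q w 0 b) w" and "subpath Q w 0 b \<noteq> w"
    using is_suffix_subpath[OF w T] b by (auto simp: plen_def dest: arg_cong[of _ _ parrs])
  moreover have "in_ideal Q R (subpath Q w 0 b)"
  proof -
    have "occurs R (parrs (subpath Q w 0 b)) (s - offset us m) b"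
      using occurs_segmentI[OF occ_w, of 0 b] b by (simp add: plen_def)
    then show ?thesis
      using in_ideal_iff_occurs[OF M is_path_subpath[OF w T]] b by auto
  qed
  ultimately show False using minimal unfolding w_def by blast
qed

lemma no_occurs_in_nonzero_factor:
  assumes M: "monomial_algebra Q R" and nz: "us ! k \<in> nonzero_paths Q R" and k: "k < length us"
    and occ: "occurs R (concat (map parrs us)) s t"
    and st: "offset us k \<le> s" "t \<le> offset us (k + 1)"
  shows False
proof -
  have "occurs R (parrs (us ! k)) (s - offset us k) (t - offset us k)"
    unfolding parrs_nth_segment[OF k] using occurs_segmentI[OF occ st offset_le_length] .
  moreover have "is_path Q (us ! k)" using nz by (simp add: nonzero_paths_def)
  ultimately have "in_ideal Q R (us ! k)" using in_ideal_iff_occurs[OF M] by blast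
  then show False using nz by (simp add: nonzero_paths_def)
qed

lemma offset_overlap_strict:
  assumes nz: "us ! m \<in> nonzero_paths Q R" and c: "composable Q (us ! m) (us ! (m + 1))"
    and I: "in_ideal Q R (pcat (us ! m) (us ! (m + 1)))" and m: "m + 1 < length us"
  shows "offset us (m + 1) < offset us (m + 2)"
proof -
  have "parrs (us ! (m + 1)) \<noteq> []"
  proof
    assume "parrs (us ! (m + 1)) = []"
    then have "pcat (us ! m) (us ! (m + 1)) = us ! m"
      using c by (cases "us ! m"; cases "us ! (m + 1)") (auto simp: composable_def pend_def pcat_def)
    then show False using I nz by (simp add: nonzero_paths_def)
  qed
  then show ?thesis using offset_Suc[of "m + 1" us] m by (simp add: plen_def)
qed

lemma occurs_of_overlap:
  assumes M: "monomial_algebra Q R" and I: "in_ideal Q R (pcat (us ! m) (us ! (m + 1)))"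
    and m: "m + 1 < length us"
  shows "\<exists>s t. occurs R (X @ concat (map parrs us) @ Y) s t
    \<and> length X + offset us m \<le> s \<and> t \<le> length X + offset us (m + 2)"
proof -
  obtain s t where "occurs R (parrs (pcat (us ! m) (us ! (m + 1)))) s t"
    using I in_ideal_iff_occurs[OF M] unfolding in_ideal_def by blast
  then have "occurs R (concat (map parrs us)) (s + offset us m) (t + offset us m)
      \<and> t + offset us m \<le> offset us (m + 2)"
    unfolding parrs_pcat_nth_segment[OF m]
    by (rule occurs_segmentD) (simp_all add: offset_mono offset_le_length)
  then show ?thesis using occurs_append[where X = X and Y = Y] by fastforce
qed

text \<open>Here occ s t means that a relation occupies [s, t); E and G list the boundaries between
  consecutive factors of an ambiguity, E for p and G for the others.\<close>

definition left_greedy :: "(nat \<Rightarrow> nat \<Rightarrow> bool) \<Rightarrow> (nat \<Rightarrow> nat) \<Rightarrow> nat \<Rightarrow> bool" where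
  "left_greedy occ E K \<longleftrightarrow>
     (\<forall>s t. occ s t \<longrightarrow> s < t \<and> t \<le> E K)
   \<and> (\<forall>m s t. 1 \<le> m \<longrightarrow> m < K \<longrightarrow> occ s t \<longrightarrow> E (m - 1) \<le> s \<longrightarrow> E (m + 1) \<le> t)
   \<and> (\<forall>s t. occ s t \<longrightarrow> \<not> E (K - 1) \<le> s)"

definition overlap_chain :: "(nat \<Rightarrow> nat \<Rightarrow> bool) \<Rightarrow> (nat \<Rightarrow> nat) \<Rightarrow> nat \<Rightarrow> bool" where
  "overlap_chain occ G I \<longleftrightarrow>
     G 1 = Suc (G 0) \<and> (\<forall>m < I. G m < G (Suc m))
   \<and> (\<forall>m. 1 \<le> m \<longrightarrow> m < I \<longrightarrow> (\<exists>s t. occ s t \<and> G (m - 1) \<le> s \<and> t \<le> G (m + 1)))"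

lemma left_greedyD:
  assumes "left_greedy occ E K" "occ s t"
  shows left_greedy_bound: "s < t \<and> t \<le> E K"
    and left_greedy_step: "1 \<le> m \<Longrightarrow> m < K \<Longrightarrow> E (m - 1) \<le> s \<Longrightarrow> E (m + 1) \<le> t"
    and left_greedy_last: "\<not> E (K - 1) \<le> s"
  using assms unfolding left_greedy_def by blast+

lemma overlap_chain_mono:
  assumes "overlap_chain occ G I" "x \<le> y" "y \<le> I"
  shows "G x \<le> G y"
  using assms(2,3)
proof (induction y rule: dec_induct)
  case (step y)
  then have "G y < G (Suc y)" using assms(1) unfolding overlap_chain_def by simp
  then show ?case using step by simp
qed simp

lemma left_greedy_leads:
  assumes E: "left_greedy occ E K" and H: "overlap_chain occ H J" and "J \<le> K"
    and "E 0 \<le> H 0" and "E 1 \<le> H 1"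
  shows "E J \<le> H J"
proof -
  have "E x \<le> H x" if "x \<le> J" for x
    using that
  proof (induction x rule: less_induct)
    case (less x)
    show ?case
    proof (cases "x \<le> 1")
      case True
      then show ?thesis using assms(4,5) by (cases x) auto
    next
      case False
      then have m: "1 \<le> x - 1" "x - 1 < J" and idx: "x - 1 - 1 = x - 2" "x - 1 + 1 = x"
        using less.prems by auto
      have "\<exists>s t. occ s t \<and> H (x - 1 - 1) \<le> s \<and> t \<le> H (x - 1 + 1)"
        using H m unfolding overlap_chain_def by blast
      then obtain s t where st: "occ s t" "H (x - 2) \<le> s" "t \<le> H x"
        unfolding idx by blast
      have "E (x - 2) \<le> H (x - 2)" by (rule less.IH) (use less.prems False in auto)
      then have "E (x - 1 - 1) \<le> s" using st(2) idx by simp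
      from left_greedy_step[OF E st(1) m(1) _ this] have "E (x - 1 + 1) \<le> t"
        using m(2) \<open>J \<le> K\<close> by simp
      then show ?thesis using st(3) idx by simp
    qed
  qed
  then show ?thesis by simp
qed

text \<open>Invariant: after x steps of G, the greedy chain has advanced x steps beyond J,
  up to the slack E (x + J - 1) < G x at odd x. Two steps of G contain a relation, which
  pushes E two steps; a single step only contributes the strict growth of G.\<close>

lemma overlap_chain_after_left_greedy:
  assumes E: "left_greedy occ E K" and G: "overlap_chain occ G I"
    and "1 \<le> I" "J \<le> K" "E J \<le> G 0" "G I \<le> E K"
  shows "I + J \<le> K"
proof -
  have G_le: "G x \<le> E K" if "x \<le> I" for x
    using overlap_chain_mono[OF G that order_refl] \<open>G I \<le> E K\<close> by simp
  have G_strict: "G m < G (Suc m)" if "m < I" for m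
    using G that unfolding overlap_chain_def by blast
  have "x + J \<le> K \<and> (even x \<longrightarrow> E (x + J) \<le> G x) \<and> (odd x \<longrightarrow> E (x + J - 1) < G x)"
    if "1 \<le> x" "x \<le> I" for x
    using that
  proof (induction x rule: less_induct)
    case (less x)
    consider "x = 1" | "2 \<le> x" "even x" | "3 \<le> x" "odd x"
      using less.prems by (metis One_nat_def Suc_1 dvd_refl le_antisym not_less_eq_eq numeral_3_eq_3 odd_one)
    then show ?case
    proof cases
      case 1
      have G1: "G 1 = Suc (G 0)" using G unfolding overlap_chain_def by blast
      have "J \<noteq> K" using G1 G_le[of 1] \<open>E J \<le> G 0\<close> less.prems 1 by auto
      then show ?thesis using 1 G1 \<open>J \<le> K\<close> \<open>E J \<le> G 0\<close> by auto
    next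
      case 2
      have m: "1 \<le> x - 1" "x - 1 < I" and idx: "x - 1 - 1 = x - 2" "x - 1 + 1 = x"
        using less.prems 2 by auto
      have "\<exists>s t. occ s t \<and> G (x - 1 - 1) \<le> s \<and> t \<le> G (x - 1 + 1)"
        using G m unfolding overlap_chain_def by blast
      then obtain s t where st: "occ s t" "G (x - 2) \<le> s" "t \<le> G x"
        unfolding idx by blast
      define y where "y = x - 2 + J"
      have "y \<le> K \<and> E y \<le> G (x - 2)"
      proof (cases "x = 2")
        case False
        then have "2 \<le> x - 2" using 2 by presburger
        then show ?thesis using less.IH[of "x - 2"] less.prems 2 unfolding y_def by auto
      qed (use \<open>J \<le> K\<close> \<open>E J \<le> G 0\<close> y_def in auto)
      then have y: "y \<le> K" "E y \<le> G (x - 2)" by auto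
      have "y \<noteq> K" using left_greedy_bound[OF E st(1)] st(2) y(2) by auto
      moreover have "y \<noteq> K - 1" using left_greedy_last[OF E st(1)] st(2) y(2) by auto
      ultimately have yK: "y + 1 < K" using y(1) by auto
      have "E (y + 1 + 1) \<le> t"
        using left_greedy_step[OF E st(1), of "y + 1"] yK st(2) y(2) by simp
      moreover have "y + 1 + 1 = x + J" using 2 unfolding y_def by simp
      ultimately show ?thesis using st(3) yK 2 by auto
    next
      case 3
      have ih: "x - 1 + J \<le> K" "E (x - 1 + J) \<le> G (x - 1)"
        using less.IH[of "x - 1"] less.prems 3 by auto
      have "G (x - 1) < G x" using G_strict[of "x - 1"] less.prems 3 by simp
      then have lt: "E (x + J - 1) < G x" using ih(2) 3 by (simp add: add.commute)
      have "x - 1 + J \<noteq> K" using lt G_le[of x] less.prems 3 by auto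
      then show ?thesis using ih(1) lt 3 by auto
    qed
  qed
  then show ?thesis using \<open>1 \<le> I\<close> by blast
qed

lemma GammaE:
  assumes "p \<in> Gamma Q R n" "0 \<le> n"
  obtains us where "length us = nat (n + 1) + 1"
    and "\<forall>k < length us. us ! k \<in> nonzero_paths Q R"
    and "\<forall>k. Suc k < length us \<longrightarrow> composable Q (us ! k) (us ! Suc k)"
    and "p = pcat_list us" and "plen (us ! 0) = 0" and "plen (us ! 1) = 1"
    and "\<forall>m. 1 \<le> m \<and> Suc m < length us \<longrightarrow> in_ideal Q R (pcat (us ! m) (us ! Suc m))
       \<and> (\<forall>q. is_suffix Q q (pcat (us ! m) (us ! Suc m)) \<and> q \<noteq> pcat (us ! m) (us ! Suc m)
             \<longrightarrow> \<not> in_ideal Q R q)"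
proof -
  have "nat (n + 2) = nat (n + 1) + 1" using assms(2) by simp
  moreover have "1 < nat (n + 1) + 1" using assms(2) by simp
  ultimately show ?thesis using assms(1) that unfolding Gamma_def left_amb_def by auto
qed

lemma Gamma_left_greedy:
  assumes M: "monomial_algebra Q R" and p: "p \<in> Gamma Q R n" and "0 \<le> n"
  shows "\<exists>E. left_greedy (occurs R (parrs p)) E (nat (n + 1))
    \<and> E 0 = 0 \<and> E 1 = 1 \<and> E (nat (n + 1)) = plen p"
proof -
  define K where "K = nat (n + 1)"
  obtain us where len: "length us = K + 1"
    and nz: "\<forall>k < length us. us ! k \<in> nonzero_paths Q R"
    and p_eq: "p = pcat_list us" and u0: "plen (us ! 0) = 0" and u1: "plen (us ! 1) = 1"
    and minimal: "\<forall>m. 1 \<le> m \<and> Suc m < length us \<longrightarrow> in_ideal Q R (pcat (us ! m) (us ! Suc m))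
       \<and> (\<forall>q. is_suffix Q q (pcat (us ! m) (us ! Suc m)) \<and> q \<noteq> pcat (us ! m) (us ! Suc m)
             \<longrightarrow> \<not> in_ideal Q R q)"
    using GammaE[OF p \<open>0 \<le> n\<close>] unfolding K_def by metis
  have K: "1 \<le> K" using \<open>0 \<le> n\<close> unfolding K_def by simp
  have arrs_p: "parrs p = concat (map parrs us)"
    unfolding p_eq using len by (intro parrs_pcat_list) auto
  have end_p: "offset us (K + 1) = plen p"
    using offset_length[of us] len arrs_p by (simp add: plen_def)
  define E where "E k = offset us (k + 1)" for k
  have "left_greedy (occurs R (parrs p)) E K"
    unfolding left_greedy_def
  proof (intro conjI allI impI)
    show "s < t" "t \<le> E K" if "occurs R (parrs p) s t" for s t
      using that end_p unfolding occurs_def E_def plen_def by auto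
    show "E (m + 1) \<le> t" if "1 \<le> m" "m < K" "occurs R (parrs p) s t" "E (m - 1) \<le> s" for m s t
      using occurs_after_minimal_overlap[OF M _ _ _ that(3)[unfolded arrs_p], of m] minimal that len
      unfolding E_def by (simp add: numeral_2_eq_2)
    show "\<not> E (K - 1) \<le> s" if "occurs R (parrs p) s t" for s t
      using no_occurs_in_nonzero_factor[OF M _ _ that[unfolded arrs_p], of K] nz len K that end_p
      unfolding E_def occurs_def by (auto simp: plen_def arrs_p)
  qed
  moreover have "E 0 = 0" "E 1 = 1" "E K = plen p"
    using offset_start[OF _ u0 u1] len K end_p unfolding E_def by (auto simp: numeral_2_eq_2)
  ultimately show ?thesis unfolding K_def by blast
qed

lemma Gamma_overlap_chain:
  assumes M: "monomial_algebra Q R" and q: "q \<in> Gamma Q R i" and "0 \<le> i"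
    and L: "L = X @ parrs q @ Y"
  shows "\<exists>G. overlap_chain (occurs R L) G (nat (i + 1))
    \<and> G 0 = length X \<and> G (nat (i + 1)) = length X + plen q"
proof -
  define I where "I = nat (i + 1)"
  obtain vs where len: "length vs = I + 1"
    and nz: "\<forall>k < length vs. vs ! k \<in> nonzero_paths Q R"
    and comp: "\<forall>k. Suc k < length vs \<longrightarrow> composable Q (vs ! k) (vs ! Suc k)"
    and q_eq: "q = pcat_list vs" and v0: "plen (vs ! 0) = 0" and v1: "plen (vs ! 1) = 1"
    and overlap: "\<forall>m. 1 \<le> m \<and> Suc m < length vs \<longrightarrow> in_ideal Q R (pcat (vs ! m) (vs ! Suc m))"
    using GammaE[OF q \<open>0 \<le> i\<close>] unfolding I_def by metis
  have I: "1 \<le> I" using \<open>0 \<le> i\<close> unfolding I_def by simp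
  have arrs_q: "parrs q = concat (map parrs vs)"
    unfolding q_eq using len by (intro parrs_pcat_list) auto
  have start: "offset vs 1 = 0" "offset vs 2 = 1"
    using offset_start[OF _ v0 v1] len I by auto
  define G where "G k = length X + offset vs (k + 1)" for k
  have "overlap_chain (occurs R L) G I"
    unfolding overlap_chain_def
  proof (intro conjI allI impI)
    show "G 1 = Suc (G 0)" using start unfolding G_def by (simp add: numeral_2_eq_2)
    show "G m < G (Suc m)" if "m < I" for m
    proof (cases "m = 0")
      case False
      then have "offset vs (m + 1) < offset vs (m + 2)"
        using offset_overlap_strict[of vs m Q R] nz comp overlap that len by simp
      then show ?thesis unfolding G_def by (simp add: numeral_2_eq_2)
    qed (use start in \<open>simp add: G_def numeral_2_eq_2\<close>)
    show "\<exists>s t. occurs R L s t \<and> G (m - 1) \<le> s \<and> t \<le> G (m + 1)" if "1 \<le> m" "m < I" for m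
      using occurs_of_overlap[OF M, of vs m X Y] overlap that len
      unfolding G_def L arrs_q by (simp add: numeral_2_eq_2)
  qed
  moreover have "G 0 = length X" "G I = length X + plen q"
    using start offset_length[of vs] len arrs_q unfolding G_def by (simp_all add: plen_def)
  ultimately show ?thesis unfolding I_def by blast
qed

theorem mainTheorem11:
  fixes Q :: "('v, 'a) quiver" and R :: "('v, 'a) qpath set"
    and n i j :: int and p a b c q1 q2 :: "('v, 'a) qpath"
  assumes "monomial_algebra Q R"
    and "0 \<le> n" and "-1 \<le> i" and "i \<le> n" and "-1 \<le> j" and "j \<le> n"
    and "p \<in> Gamma Q R n"
    and "composable Q c q2" and "composable Q q2 b" and "composable Q b q1" and "composable Q q1 a"
    and "p = pcat c (pcat q2 (pcat b (pcat q1 a)))"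
    and "q1 \<in> Gamma Q R i" and "q2 \<in> Gamma Q R j"
  shows "i + j \<le> n - 1"
proof (cases "0 \<le> i \<and> 0 \<le> j")
  case True
  define L where "L = parrs p"
  have L_q2: "L = parrs c @ parrs q2 @ (parrs b @ parrs q1 @ parrs a)"
    and L_q1: "L = (parrs c @ parrs q2 @ parrs b) @ parrs q1 @ parrs a"
    unfolding L_def assms(12) by (simp_all add: pcat_def)
  obtain E where E: "left_greedy (occurs R L) E (nat (n + 1))" "E 0 = 0" "E 1 = 1"
    "E (nat (n + 1)) = length L"
    using Gamma_left_greedy[OF assms(1,7,2)] unfolding L_def plen_def by blast
  obtain H where H: "overlap_chain (occurs R L) H (nat (j + 1))"
    "H (nat (j + 1)) = length (parrs c) + plen q2"
    using Gamma_overlap_chain[OF assms(1,14) _ L_q2] True by blast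
  obtain G where G: "overlap_chain (occurs R L) G (nat (i + 1))"
    "G 0 = length (parrs c @ parrs q2 @ parrs b)" "G (nat (i + 1)) = length (parrs c @ parrs q2 @ parrs b) + plen q1"
    using Gamma_overlap_chain[OF assms(1,13) _ L_q1] True by blast
  have JK: "nat (j + 1) \<le> nat (n + 1)" using assms(6) by (intro nat_mono) simp
  have "E (nat (j + 1)) \<le> H (nat (j + 1))"
    using left_greedy_leads[OF E(1) H(1) JK] E(2,3) H(1) unfolding overlap_chain_def by simp
  then have "E (nat (j + 1)) \<le> G 0" using H(2) G(2) by (simp add: plen_def)
  moreover have "G (nat (i + 1)) \<le> E (nat (n + 1))" using G(3) E(4) L_q1 by (simp add: plen_def)
  ultimately have "nat (i + 1) + nat (j + 1) \<le> nat (n + 1)"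
    using overlap_chain_after_left_greedy[OF E(1) G(1) _ JK] True by linarith
  then show ?thesis using True by linarith
qed (use assms(3-6) in linarith)

end
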